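(* Let $m$ be a positive integer with $\omega(m)\geq 149$. Then $W(m)<m^{1/8}$.
   Context: For a positive integer $m$, $\omega(m)$ is the number of distinct prime divisors of $m$ and $W(m)=2^{\omega(m)}$. *)

theory Defs
  imports Complex_Main "HOL-Computational_Algebra.Primes"
begin

definition omega :: "nat \<Rightarrow> nat" where
  "omega m = card (prime_factors m)"

definition W :: "nat \<Rightarrow> nat" where
  "W m = 2 ^ omega m"

end

theory Submission
  imports Defs
begin

text \<open>
  The 148 primes below 859 have a product q with 859 q > 256^149, by a margin of only about
  0.16 bits. A set P of k \<ge> 149 primes contains at most these primes below 859 and all its
  other elements are at least 859, so \<Prod>P \<ge> q 859^(k - 148) > 256^k. Applied to the prime
  divisors of m this gives 256^\<omega>(m) < m, and taking eighth roots finishes the proof.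
\<close>

lemma prod_mult_threshold_power_le:
  fixes P Q :: "nat set" and T :: nat
  assumes "finite P" and "finite Q" and "\<forall>q\<in>Q. q \<le> T" and "P \<inter> {..<T} \<subseteq> Q"
    and "card Q \<le> card P"
  shows "\<Prod>Q * T ^ (card P - card Q) \<le> \<Prod>P"
proof -
  define A where "A = P \<inter> {..<T}"
  have "A \<subseteq> P" "A \<subseteq> Q" "finite A"
    using assms(1,4) by (auto simp: A_def)
  then have card_A: "card A \<le> card Q" "card A \<le> card P"
    using assms(1,2) by (auto intro: card_mono)
  have "\<Prod>Q = \<Prod>A * \<Prod>(Q - A)"
    using \<open>A \<subseteq> Q\<close> assms(2) by (metis prod.subset_diff mult.commute)
  also have "\<Prod>(Q - A) \<le> (\<Prod>q\<in>Q - A. T)"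
    using assms(3) by (intro prod_mono) auto
  finally have Q_le: "\<Prod>Q \<le> \<Prod>A * T ^ (card Q - card A)"
    using \<open>A \<subseteq> Q\<close> \<open>finite A\<close> by (simp add: card_Diff_subset)
  have "(\<Prod>p\<in>P - A. T) \<le> \<Prod>(P - A)"
    by (intro prod_mono) (auto simp: A_def)
  then have P_ge: "\<Prod>A * T ^ (card P - card A) \<le> \<Prod>P"
    using \<open>A \<subseteq> P\<close> \<open>finite A\<close> assms(1)
    by (simp add: card_Diff_subset prod.subset_diff[of A P] mult.commute)
  have "\<Prod>Q * T ^ (card P - card Q) \<le> \<Prod>A * T ^ (card Q - card A) * T ^ (card P - card Q)"
    using Q_le by (rule mult_le_mono1)
  also have "\<dots> = \<Prod>A * T ^ (card P - card A)"
    using card_A assms(5) by (simp add: mult.assoc flip: power_add)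
  finally show ?thesis
    using P_ge by linarith
qed

lemma prod_list_concat_ge:
  fixes xss :: "nat list list" and b :: nat
  assumes "list_all2 (\<lambda>xs (a, e). a * b ^ e \<le> prod_list xs) xss bounds"
  shows "prod_list (map fst bounds) * b ^ sum_list (map snd bounds) \<le> prod_list (concat xss)"
  using assms
proof (induction rule: list_all2_induct)
  case Nil
  then show ?case by simp
next
  case (Cons xs xss bound bounds)
  obtain a e where "bound = (a, e)" by fastforce
  with Cons have "a * b ^ e * (prod_list (map fst bounds) * b ^ sum_list (map snd bounds))
      \<le> prod_list xs * prod_list (concat xss)"
    by (intro mult_le_mono) auto
  with \<open>bound = (a, e)\<close> show ?case
    by (simp add: power_add ac_simps)
qed

lemma prod_prime_factors_le:
  fixes n :: nat
  assumes "n > 0"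
  shows "\<Prod>(prime_factors n) \<le> n"
proof (rule dvd_imp_le)
  have "\<Prod>(prime_factors n) dvd (\<Prod>p\<in>prime_factors n. p ^ multiplicity p n)"
    using assms by (intro prod_dvd_prod dvd_power) (auto simp: prime_factors_multiplicity)
  then show "\<Prod>(prime_factors n) dvd n"
    using prime_factorization_nat[OF assms] by simp
qed (fact assms)

definition passes_trial_division :: "nat list \<Rightarrow> nat \<Rightarrow> bool" where
  "passes_trial_division ds n \<longleftrightarrow> list_all (\<lambda>d. n mod d = 0 \<longrightarrow> n = d) ds"

lemma prime_passes_trial_division:
  assumes "prime p" and "1 \<notin> set ds"
  shows "passes_trial_division ds p"
  using assms by (auto simp: passes_trial_division_def list_all_iff prime_nat_iff)

text \<open>
  Primality of these entries is never used: it suffices that every prime below 859 occurs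
  among them.
\<close>

definition primes_below_859_by_hundreds :: "nat list list" where
  "primes_below_859_by_hundreds =
    [[2, 3, 5, 7, 11, 13, 17, 19, 23, 29, 31, 37, 41, 43, 47, 53, 59, 61, 67, 71, 73, 79, 83, 89, 97],
     [101, 103, 107, 109, 113, 127, 131, 137, 139, 149, 151, 157, 163, 167, 173, 179, 181, 191, 193, 197, 199],
     [211, 223, 227, 229, 233, 239, 241, 251, 257, 263, 269, 271, 277, 281, 283, 293],
     [307, 311, 313, 317, 331, 337, 347, 349, 353, 359, 367, 373, 379, 383, 389, 397],
     [401, 409, 419, 421, 431, 433, 439, 443, 449, 457, 461, 463, 467, 479, 487, 491, 499],
     [503, 509, 521, 523, 541, 547, 557, 563, 569, 571, 577, 587, 593, 599],
     [601, 607, 613, 617, 619, 631, 641, 643, 647, 653, 659, 661, 673, 677, 683, 691],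
     [701, 709, 719, 727, 733, 739, 743, 751, 757, 761, 769, 773, 787, 797],
     [809, 811, 821, 823, 827, 829, 839, 853, 857]]"

lemma filter_trial_division_below_859:
  "filter (passes_trial_division [2, 3, 5, 7, 11, 13, 17, 19, 23, 29]) [2..<859]
     = concat primes_below_859_by_hundreds"
proof -
  have "[2..<859] = concat [[2..<100], [100..<200], [200..<300], [300..<400], [400..<500],
      [500..<600], [600..<700], [700..<800], [800..<859]]"
    by (simp flip: upt_add_eq_append)
  then show ?thesis
    by (simp only: filter_concat)
      (simp add: passes_trial_division_def primes_below_859_by_hundreds_def upt_rec)
qed

lemma pow_256_149_lt_prod_primes_below_859:
  "(256::nat) ^ 149 < 859 * prod_list (concat primes_below_859_by_hundreds)"
proof -
  txt \<open>
    Each pair \<open>(a, e)\<close> has \<open>a = \<lfloor>\<Prod>block / 2\<^sup>e\<rfloor>\<close>, a 20-bit mantissa; this avoids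
    evaluating the 1200-bit product itself.
  \<close>
  define bounds :: "(nat \<times> nat) list" where
    "bounds = [(909386, 101), (621373, 132), (807428, 108), (599042, 116), (901790, 130),
      (779789, 108), (645810, 130), (812090, 114), (631574, 68)]"
  have "(256::nat) ^ 149 = 2 ^ 185 * 2 ^ sum_list (map snd bounds)"
    by (simp add: bounds_def flip: power_add power_mult)
  also have "\<dots> < 859 * prod_list (map fst bounds) * 2 ^ sum_list (map snd bounds)"
    by (intro mult_strict_right_mono) (simp_all add: bounds_def)
  also have "\<dots> \<le> 859 * prod_list (concat primes_below_859_by_hundreds)"
    unfolding mult.assoc
    by (intro mult_le_mono2 prod_list_concat_ge)
      (simp add: bounds_def primes_below_859_by_hundreds_def)
  finally show ?thesis .
qed

lemma prod_primes_gt_pow_256: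
  fixes P :: "nat set"
  assumes "finite P" and "\<forall>p\<in>P. prime p" and "card P \<ge> 149"
  shows "256 ^ card P < \<Prod>P"
proof -
  define L where "L = concat primes_below_859_by_hundreds"
  have L_eq: "L = filter (passes_trial_division [2, 3, 5, 7, 11, 13, 17, 19, 23, 29]) [2..<859]"
    unfolding L_def by (rule filter_trial_division_below_859[symmetric])
  have "distinct L"
    unfolding L_eq by (simp only: distinct_filter distinct_upt)
  moreover have "length L = 148"
    by (simp add: L_def primes_below_859_by_hundreds_def)
  ultimately have card_L: "card (set L) = 148" and prod_L: "\<Prod>(set L) = prod_list L"
    by (simp_all add: distinct_card prod.distinct_set_conv_list)
  have "P \<inter> {..<859} \<subseteq> set L"
  proof
    fix p
    assume "p \<in> P \<inter> {..<859}"
    then have "prime p" and "p < 859"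
      using assms(2) by auto
    then show "p \<in> set L"
      unfolding L_eq set_filter set_upt
      by (simp add: prime_ge_2_nat prime_passes_trial_division)
  qed
  moreover have "\<forall>q\<in>set L. q \<le> 859"
    unfolding L_eq set_filter set_upt by simp
  ultimately have "\<Prod>(set L) * 859 ^ (card P - 148) \<le> \<Prod>P"
    using prod_mult_threshold_power_le[of P "set L" 859] assms(1,3) card_L by simp
  moreover have "256 ^ card P < \<Prod>(set L) * 859 ^ (card P - 148)"
  proof -
    have "card P = 149 + (card P - 149)"
      using assms(3) by simp
    then have "(256::nat) ^ card P = 256 ^ 149 * 256 ^ (card P - 149)"
      by (metis power_add)
    also have "\<dots> < (859 * prod_list L) * 859 ^ (card P - 149)"
      using pow_256_149_lt_prod_primes_below_859
      by (intro mult_less_le_imp_less power_mono) (simp_all add: L_def)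
    also have "\<dots> = \<Prod>(set L) * 859 ^ Suc (card P - 149)"
      by (simp add: prod_L)
    also have "Suc (card P - 149) = card P - 148"
      using assms(3) by simp
    finally show ?thesis .
  qed
  ultimately show ?thesis
    by linarith
qed

theorem lemma5p1:
  fixes m :: nat
  assumes "m > 0" and "omega m \<ge> 149"
  shows "real (W m) < real m powr (1/8)"
proof -
  have "256 ^ omega m < \<Prod>(prime_factors m)"
    using prod_primes_gt_pow_256[of "prime_factors m"] assms(2)
    by (simp add: omega_def in_prime_factors_imp_prime)
  also have "\<dots> \<le> m"
    using assms(1) by (rule prod_prime_factors_le)
  finally have "real (256 ^ omega m) < real m"
    by simp
  moreover have "real (W m) = real (256 ^ omega m) powr (1/8)"
  proof -
    have "real (256 ^ omega m) = 2 powr real (8 * omega m)"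
      by (subst powr_realpow) (simp_all add: power_mult)
    then show ?thesis
      by (simp add: W_def powr_powr powr_realpow)
  qed
  ultimately show ?thesis
    by (simp add: powr_less_mono2)
qed

end
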